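(* Let $g(\alpha,\beta,\gamma)=\gamma^{3/2}+\min\big(0.465,\frac{3\alpha\beta}{\alpha+\beta},3\alpha\sqrt\beta\big)$, where $\frac{\alpha\beta}{\alpha+\beta}:=0$ if $(\alpha,\beta)=(0,0)$, and $f(\alpha,\beta,\gamma,\delta)=\min\big(2\delta^{3/2}+g(\alpha,\beta,\gamma),\tfrac14+\tfrac34g(\alpha,\beta,\gamma)\big)$. Let $V$ be a set of $n$ vertices and suppose each unordered pair of distinct vertices is assigned exactly one of: red with a direction, blue, green, or purple with a direction, with $2\alpha\binom n2$ red, $\beta\binom n2$ blue, $\gamma\binom n2$ green and $2\delta\binom n2$ purple pairs. Then $T_p+T_g+T_c\le f(\alpha,\beta,\gamma,\delta)\,n^3/6$.
   Context: $T_g$ is the number of $3$-subsets of $V$ all of whose pairs are green; $T_p$ the number of $3$-subsets all of whose pairs are purple and directed cyclically; $T_c$ the number of $3$-subsets $\{x,y,z\}$ such that, for some labeling, $\{y,z\}$ is blue and $\{x,y\},\{x,z\}$ are red, directed $y\to x$ and $z\to x$. *)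

theory Defs
  imports Complex_Main
begin

datatype colour = Red | Blue | Green | Purple

text \<open>A colouring of the unordered pairs of distinct vertices of V: col gives the colour
  (required symmetric), dir gives the direction of red and purple pairs
  (dir x y means the pair is directed x to y; exactly one direction).\<close>
definition valid_colouring :: "'a set \<Rightarrow> ('a \<Rightarrow> 'a \<Rightarrow> colour) \<Rightarrow> ('a \<Rightarrow> 'a \<Rightarrow> bool) \<Rightarrow> bool" where
  "valid_colouring V col dir \<longleftrightarrow>
     (\<forall>x\<in>V. \<forall>y\<in>V. x \<noteq> y \<longrightarrow> col x y = col y x) \<and>
     (\<forall>x\<in>V. \<forall>y\<in>V. x \<noteq> y \<longrightarrow> col x y \<in> {Red, Purple} \<longrightarrow> (dir x y \<longleftrightarrow> \<not> dir y x))"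

definition pairs_of_colour :: "'a set \<Rightarrow> ('a \<Rightarrow> 'a \<Rightarrow> colour) \<Rightarrow> colour \<Rightarrow> 'a set set" where
  "pairs_of_colour V col c = {e. e \<subseteq> V \<and> (\<exists>x y. e = {x, y} \<and> x \<noteq> y \<and> col x y = c)}"

definition T_g :: "'a set \<Rightarrow> ('a \<Rightarrow> 'a \<Rightarrow> colour) \<Rightarrow> nat" where
  "T_g V col = card {S. S \<subseteq> V \<and> (\<exists>x y z. S = {x, y, z} \<and> x \<noteq> y \<and> y \<noteq> z \<and> x \<noteq> z \<and>
       col x y = Green \<and> col y z = Green \<and> col x z = Green)}"

definition T_p :: "'a set \<Rightarrow> ('a \<Rightarrow> 'a \<Rightarrow> colour) \<Rightarrow> ('a \<Rightarrow> 'a \<Rightarrow> bool) \<Rightarrow> nat" where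
  "T_p V col dir = card {S. S \<subseteq> V \<and> (\<exists>x y z. S = {x, y, z} \<and> x \<noteq> y \<and> y \<noteq> z \<and> x \<noteq> z \<and>
       col x y = Purple \<and> col y z = Purple \<and> col z x = Purple \<and>
       dir x y \<and> dir y z \<and> dir z x)}"

definition T_c :: "'a set \<Rightarrow> ('a \<Rightarrow> 'a \<Rightarrow> colour) \<Rightarrow> ('a \<Rightarrow> 'a \<Rightarrow> bool) \<Rightarrow> nat" where
  "T_c V col dir = card {S. S \<subseteq> V \<and> (\<exists>x y z. S = {x, y, z} \<and> x \<noteq> y \<and> y \<noteq> z \<and> x \<noteq> z \<and>
       col y z = Blue \<and> col x y = Red \<and> col x z = Red \<and> dir y x \<and> dir z x)}"

definition hm :: "real \<Rightarrow> real \<Rightarrow> real" where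
  "hm a b = (if a = 0 \<and> b = 0 then 0 else a * b / (a + b))"

definition g_fun :: "real \<Rightarrow> real \<Rightarrow> real \<Rightarrow> real" where
  "g_fun a b c = c powr (3/2) + min 0.465 (min (3 * hm a b) (3 * a * sqrt b))"

definition f_fun :: "real \<Rightarrow> real \<Rightarrow> real \<Rightarrow> real \<Rightarrow> real" where
  "f_fun a b c d = min (2 * d powr (3/2) + g_fun a b c) (1/4 + 3/4 * g_fun a b c)"

end

theory Submission
  imports Defs "HOL-Analysis.Convex"
begin

(*
  Green triangles and cyclic purple triangles are closed walks x -> y -> z -> x in a 0/1 matrix
  with E nonzero entries, and by Cauchy-Schwarz there are at most E^(3/2) of them.  Cherries are
  counted at their apex: the blue pairs inside the red in-neighbourhood of a vertex number at most
  indeg^2 and at most all blue pairs, which gives 3 alpha sqrt beta; dropping one red arc leaves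
  sum_y blue(y) outdeg(y) with blue(y) + outdeg(y) <= n - 1, which gives 3 alpha beta/(alpha + beta).

  The bound 0.465 for cherries and 4 T_p + T_g + T_c <= n^3/6 come from local certificates: a
  weight a x y z for each vertex x and ordered pair (y, z) such that on each triple the weights
  seen from its three vertices exceed the triple's contribution by at least kappa, while for
  fixed x the weights sum to c (n - 1)^2 minus a nonnegative quadratic form in the neighbourhood
  counts of x.  Summing over ordered triples gives 6 T <= 3 c n (n - 1)^2 - kappa n (n - 1) (n - 2).
  The second term of f then comes from T_p + T_g + T_c = (4 T_p + T_g + T_c)/4 + 3 (T_g + T_c)/4.
*)

section \<open>Three-element subsets and ordered triples\<close>

definition three_subsets_with :: "'a set \<Rightarrow> ('a \<Rightarrow> 'a \<Rightarrow> 'a \<Rightarrow> bool) \<Rightarrow> 'a set set" where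
  "three_subsets_with V P =
     {S. S \<subseteq> V \<and> (\<exists>x y z. S = {x, y, z} \<and> x \<noteq> y \<and> y \<noteq> z \<and> x \<noteq> z \<and> P x y z)}"

definition in_some_order :: "('a \<Rightarrow> 'a \<Rightarrow> 'a \<Rightarrow> bool) \<Rightarrow> 'a \<Rightarrow> 'a \<Rightarrow> 'a \<Rightarrow> bool" where
  "in_some_order P x y z \<longleftrightarrow> P x y z \<or> P x z y \<or> P y x z \<or> P y z x \<or> P z x y \<or> P z y x"

lemma three_set_eq_iff:
  assumes "a \<noteq> b" "b \<noteq> c" "a \<noteq> c"
  shows "{x, y, z} = {a, b, c} \<longleftrightarrow> (x, y, z) \<in> {(a,b,c), (a,c,b), (b,a,c), (b,c,a), (c,a,b), (c,b,a)}"
proof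
  assume xyz: "{x, y, z} = {a, b, c}"
  have "card {x, y, z} = 3" using xyz assms by simp
  then have "x \<noteq> y" "y \<noteq> z" "x \<noteq> z" by (auto simp: card_insert_if split: if_splits)
  moreover have "x \<in> {a,b,c}" "y \<in> {a,b,c}" "z \<in> {a,b,c}" using xyz by blast+
  ultimately show "(x, y, z) \<in> {(a,b,c), (a,c,b), (b,a,c), (b,c,a), (c,a,b), (c,b,a)}" by auto
next
  assume "(x, y, z) \<in> {(a,b,c), (a,c,b), (b,a,c), (b,c,a), (c,a,b), (c,b,a)}"
  then show "{x, y, z} = {a, b, c}"
    by (simp only: insert_iff empty_iff prod.inject) (elim disjE conjE; simp add: insert_commute)
qed

lemma mem_three_subsets_with_iff:
  assumes "x \<in> V" "y \<in> V" "z \<in> V" "x \<noteq> y" "y \<noteq> z" "x \<noteq> z"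
  shows "{x, y, z} \<in> three_subsets_with V P \<longleftrightarrow> in_some_order P x y z"
proof
  assume "{x, y, z} \<in> three_subsets_with V P"
  then obtain a b c where abc: "{x, y, z} = {a, b, c}" "a \<noteq> b" "b \<noteq> c" "a \<noteq> c" "P a b c"
    unfolding three_subsets_with_def mem_Collect_eq by (elim conjE exE) (rule that)
  have "(x, y, z) \<in> {(a,b,c), (a,c,b), (b,a,c), (b,c,a), (c,a,b), (c,b,a)}"
    using abc(1) by (rule three_set_eq_iff[OF abc(2-4), THEN iffD1])
  then show "in_some_order P x y z"
    using \<open>P a b c\<close> unfolding in_some_order_def
    by (simp only: insert_iff empty_iff prod.inject) (elim disjE conjE; simp)
next
  assume "in_some_order P x y z"
  then obtain a b c where abc: "(a, b, c) \<in> {(x,y,z), (x,z,y), (y,x,z), (y,z,x), (z,x,y), (z,y,x)}" "P a b c"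
    unfolding in_some_order_def by blast
  have eq: "{a, b, c} = {x, y, z}"
    using abc(1) by (rule three_set_eq_iff[OF assms(4-6), THEN iffD2])
  have "a \<noteq> b" "b \<noteq> c" "a \<noteq> c"
    using abc(1) assms(4-6) by (simp_all only: insert_iff empty_iff prod.inject) (elim disjE conjE; simp)+
  moreover have "{a, b, c} \<subseteq> V" using eq assms(1-3) by simp
  ultimately have "{a, b, c} \<in> three_subsets_with V P"
    using abc(2) unfolding three_subsets_with_def by blast
  then show "{x, y, z} \<in> three_subsets_with V P" by (simp only: eq)
qed

lemma card_distinct_triples_in_some_order:
  assumes "finite V"
  shows "card {(x, y, z) \<in> V \<times> V \<times> V. x \<noteq> y \<and> y \<noteq> z \<and> x \<noteq> z \<and> in_some_order P x y z}
           = 6 * card (three_subsets_with V P)"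
    (is "card ?T = 6 * card ?F")
proof -
  define set_of where "set_of = (\<lambda>(x, y, z). {x, y, z :: 'a})"
  have "?T \<subseteq> V \<times> V \<times> V" by auto
  then have "finite ?T" using assms by (meson finite_SigmaI finite_subset)
  have "?F \<subseteq> Pow V" unfolding three_subsets_with_def by auto
  then have "finite ?F" using assms by (simp add: finite_subset)
  have "set_of ` ?T \<subseteq> ?F"
    by (auto simp: set_of_def mem_three_subsets_with_iff)
  have "card {t \<in> ?T. set_of t = S} = 6" if "S \<in> ?F" for S
  proof -
    obtain a b c where S: "S = {a, b, c}" "S \<subseteq> V" and abc: "a \<noteq> b" "b \<noteq> c" "a \<noteq> c"
      using \<open>S \<in> ?F\<close> unfolding three_subsets_with_def mem_Collect_eq by (elim conjE exE) (rule that)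
    have "{t \<in> ?T. set_of t = S} = {(a,b,c), (a,c,b), (b,a,c), (b,c,a), (c,a,b), (c,b,a)}"
    proof (intro set_eqI iffI)
      fix t assume t: "t \<in> {t \<in> ?T. set_of t = S}"
      obtain x y z where [simp]: "t = (x, y, z)" by (cases t)
      have "{x, y, z} = {a, b, c}" using t S(1) by (simp add: set_of_def)
      then show "t \<in> {(a,b,c), (a,c,b), (b,a,c), (b,c,a), (c,a,b), (c,b,a)}"
        unfolding \<open>t = (x, y, z)\<close> by (rule three_set_eq_iff[OF abc, THEN iffD1])
    next
      fix t assume t: "t \<in> {(a,b,c), (a,c,b), (b,a,c), (b,c,a), (c,a,b), (c,b,a)}"
      obtain x y z where [simp]: "t = (x, y, z)" by (cases t)
      have S_eq: "{x, y, z} = S" using t three_set_eq_iff[OF abc] S(1) by simp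
      then have xyz: "x \<in> V" "y \<in> V" "z \<in> V" "x \<noteq> y" "y \<noteq> z" "x \<noteq> z"
        using t S abc by auto
      then have "in_some_order P x y z"
        using mem_three_subsets_with_iff[OF xyz] S_eq \<open>S \<in> ?F\<close> by simp
      then show "t \<in> {t \<in> ?T. set_of t = S}"
        using xyz S_eq by (simp add: set_of_def)
    qed
    then show ?thesis using abc by simp
  qed
  then have "(\<Sum>S\<in>?F. card {t \<in> ?T. set_of t = S}) = 6 * card ?F" by simp
  moreover have "(\<Sum>S\<in>?F. card {t \<in> ?T. set_of t = S}) = card ?T"
    unfolding card_eq_sum by (rule sum.group[OF \<open>finite ?T\<close> \<open>finite ?F\<close> \<open>set_of ` ?T \<subseteq> ?F\<close>])
  ultimately show ?thesis by simp
qed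

lemma sum_of_bool_over_triples:
  assumes "finite V"
  shows "(\<Sum>x\<in>V. \<Sum>y\<in>V. \<Sum>z\<in>V. of_bool (Q x y z) :: real)
           = real (card {(x, y, z) \<in> V \<times> V \<times> V. Q x y z})"
proof -
  have "(\<Sum>x\<in>V. \<Sum>y\<in>V. \<Sum>z\<in>V. of_bool (Q x y z) :: real)
      = (\<Sum>(x, y, z) \<in> V \<times> V \<times> V. of_bool (Q x y z))"
    by (simp add: sum.cartesian_product)
  also have "\<dots> = (\<Sum>t \<in> V \<times> V \<times> V. of_bool ((\<lambda>(x, y, z). Q x y z) t))"
    by (simp add: case_prod_unfold)
  also have "\<dots> = real (card {(x, y, z) \<in> V \<times> V \<times> V. Q x y z})"
    using assms by (simp only: sum_of_bool_eq finite_SigmaI) (auto intro!: arg_cong[where f = card])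
  finally show ?thesis .
qed

lemma sum_ordered_triples_three_subsets_with:
  assumes "finite V"
  shows "(\<Sum>x\<in>V. \<Sum>y\<in>V. \<Sum>z\<in>V. of_bool (x \<noteq> y \<and> y \<noteq> z \<and> x \<noteq> z) * of_bool (in_some_order P x y z) :: real)
           = 6 * real (card (three_subsets_with V P))"
  using sum_of_bool_over_triples[OF assms] card_distinct_triples_in_some_order[OF assms]
  by (simp add: of_bool_conj[symmetric] conj_assoc)

lemma card_ordered_pairs_symmetric:
  assumes "finite V" and sym: "\<And>x y. x \<in> V \<Longrightarrow> y \<in> V \<Longrightarrow> P y x \<longleftrightarrow> P x y"
  shows "card {(x, y) \<in> V \<times> V. x \<noteq> y \<and> P x y}
           = 2 * card {e. e \<subseteq> V \<and> (\<exists>x y. e = {x, y} \<and> x \<noteq> y \<and> P x y)}"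
    (is "card ?T = 2 * card ?F")
proof -
  define set_of where "set_of = (\<lambda>(x, y). {x, y :: 'a})"
  have "?T \<subseteq> V \<times> V" by auto
  then have "finite ?T" using assms(1) by (meson finite_SigmaI finite_subset)
  have "?F \<subseteq> Pow V" by auto
  then have "finite ?F" using assms(1) by (simp add: finite_subset)
  have "set_of ` ?T \<subseteq> ?F" by (auto simp: set_of_def)
  have "card {t \<in> ?T. set_of t = e} = 2" if "e \<in> ?F" for e
  proof -
    obtain a b where e: "e = {a, b}" "e \<subseteq> V" and ab: "a \<noteq> b" "P a b"
      using \<open>e \<in> ?F\<close> by blast
    have "P b a" using sym ab e by auto
    have "{t \<in> ?T. set_of t = e} = {(a, b), (b, a)}"
      using e ab \<open>P b a\<close> by (auto simp: set_of_def doubleton_eq_iff)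
    then show ?thesis using ab by simp
  qed
  then have "(\<Sum>e\<in>?F. card {t \<in> ?T. set_of t = e}) = 2 * card ?F" by simp
  moreover have "(\<Sum>e\<in>?F. card {t \<in> ?T. set_of t = e}) = card ?T"
    unfolding card_eq_sum by (rule sum.group[OF \<open>finite ?T\<close> \<open>finite ?F\<close> \<open>set_of ` ?T \<subseteq> ?F\<close>])
  ultimately show ?thesis by simp
qed

lemma sum_of_bool_over_pairs:
  assumes "finite V"
  shows "(\<Sum>x\<in>V. \<Sum>y\<in>V. of_bool (Q x y) :: real) = real (card {(x, y) \<in> V \<times> V. Q x y})"
proof -
  have "(\<Sum>x\<in>V. \<Sum>y\<in>V. of_bool (Q x y) :: real) = (\<Sum>t \<in> V \<times> V. of_bool ((\<lambda>(x, y). Q x y) t))"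
    by (simp add: sum.cartesian_product case_prod_unfold)
  also have "\<dots> = real (card {(x, y) \<in> V \<times> V. Q x y})"
    using assms by (simp only: sum_of_bool_eq finite_SigmaI) (auto intro!: arg_cong[where f = card])
  finally show ?thesis .
qed

lemma sum_triples_swap:
  fixes f :: "'a \<Rightarrow> 'a \<Rightarrow> 'a \<Rightarrow> 'b::comm_monoid_add"
  shows "(\<Sum>x\<in>V. \<Sum>y\<in>V. \<Sum>z\<in>V. f y x z) = (\<Sum>x\<in>V. \<Sum>y\<in>V. \<Sum>z\<in>V. f x y z)"
    and "(\<Sum>x\<in>V. \<Sum>y\<in>V. \<Sum>z\<in>V. f x z y) = (\<Sum>x\<in>V. \<Sum>y\<in>V. \<Sum>z\<in>V. f x y z)"
    and "(\<Sum>x\<in>V. \<Sum>y\<in>V. \<Sum>z\<in>V. f z x y) = (\<Sum>x\<in>V. \<Sum>y\<in>V. \<Sum>z\<in>V. f x y z)"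
proof -
  show "(\<Sum>x\<in>V. \<Sum>y\<in>V. \<Sum>z\<in>V. f y x z) = (\<Sum>x\<in>V. \<Sum>y\<in>V. \<Sum>z\<in>V. f x y z)"
    by (rule sum.swap)
  show "(\<Sum>x\<in>V. \<Sum>y\<in>V. \<Sum>z\<in>V. f x z y) = (\<Sum>x\<in>V. \<Sum>y\<in>V. \<Sum>z\<in>V. f x y z)"
    by (rule sum.cong[OF refl], rule sum.swap)
  show "(\<Sum>x\<in>V. \<Sum>y\<in>V. \<Sum>z\<in>V. f z x y) = (\<Sum>x\<in>V. \<Sum>y\<in>V. \<Sum>z\<in>V. f x y z)"
    by (subst sum.swap) (rule sum.cong[OF refl], rule sum.swap)
qed

lemma sum_of_bool_neq:
  assumes "finite V" "x \<in> V"
  shows "(\<Sum>y\<in>V. of_bool (x \<noteq> y) :: real) = real (card V) - 1"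
proof -
  have "V \<inter> {y. x \<noteq> y} = V - {x}" by auto
  moreover have "1 \<le> card V" using assms card_0_eq by fastforce
  ultimately show ?thesis using assms by (simp add: of_nat_diff)
qed

lemma sum_of_bool_distinct_triples:
  assumes "finite V"
  shows "(\<Sum>x\<in>V. \<Sum>y\<in>V. \<Sum>z\<in>V. of_bool (x \<noteq> y \<and> y \<noteq> z \<and> x \<noteq> z) :: real)
           = real (card V) * (real (card V) - 1) * (real (card V) - 2)"
proof -
  have "(\<Sum>z\<in>V. of_bool (x \<noteq> y \<and> y \<noteq> z \<and> x \<noteq> z) :: real) = of_bool (x \<noteq> y) * (real (card V) - 2)"
    if "x \<in> V" "y \<in> V" for x y
  proof (cases "x = y")
    case False
    have "card {x, y} \<le> card V" using assms that by (intro card_mono) auto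
    with False have "2 \<le> card V" by simp
    have "V \<inter> {z. x \<noteq> y \<and> y \<noteq> z \<and> x \<noteq> z} = V - {x, y}" using False by auto
    then show ?thesis
      using assms that False \<open>2 \<le> card V\<close> by (simp add: card_Diff_subset of_nat_diff)
  qed simp
  then show ?thesis
    using sum_of_bool_neq[OF assms] by (simp flip: sum_distrib_right)
qed

lemma real_choose_two: "real (n choose 2) = real n * (real n - 1) / 2"
  by (simp add: binomial_gbinomial gbinomial_pochhammer' numeral_2_eq_2 pochhammer_Suc)

lemma mult_pred_le_square: "real n * (real n - 1) \<le> real n ^ 2"
  by (simp add: power2_eq_square algebra_simps)

lemma pred_mult_mult_pred_le_cube: "(real n - 1) * (real n * (real n - 1)) \<le> real n ^ 3"
proof -
  have "real n \<le> real n * real n" by (metis le_square of_nat_le_iff of_nat_mult)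
  then have "real n \<le> 2 * (real n * real n)" by linarith
  then show ?thesis by (simp add: power3_eq_cube algebra_simps)
qed

lemma cyclic_triangle_sum_squared_le:
  fixes M :: "'a \<Rightarrow> 'a \<Rightarrow> real"
  assumes M_ge: "\<And>x y. x \<in> V \<Longrightarrow> y \<in> V \<Longrightarrow> 0 \<le> M x y"
    and M_le: "\<And>x y. x \<in> V \<Longrightarrow> y \<in> V \<Longrightarrow> M x y \<le> 1"
  shows "(\<Sum>x\<in>V. \<Sum>y\<in>V. \<Sum>z\<in>V. M x y * M y z * M z x)\<^sup>2 \<le> (\<Sum>x\<in>V. \<Sum>y\<in>V. M x y) ^ 3"
proof -
  define E where "E = (\<Sum>x\<in>V. \<Sum>y\<in>V. M x y)"
  define paths where "paths x y = (\<Sum>z\<in>V. M y z * M z x)" for x y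
  define out where "out y = (\<Sum>z\<in>V. M y z)" for y
  define inn where "inn x = (\<Sum>z\<in>V. M z x)" for x
  have sq_le: "(M x y)\<^sup>2 \<le> M x y" if "x \<in> V" "y \<in> V" for x y
    using M_ge[OF that] M_le[OF that] by (simp add: power2_eq_square mult_left_le)
  have "0 \<le> E" unfolding E_def by (intro sum_nonneg M_ge)
  have "(\<Sum>x\<in>V. \<Sum>y\<in>V. \<Sum>z\<in>V. M x y * M y z * M z x) = (\<Sum>x\<in>V. \<Sum>y\<in>V. M x y * paths x y)"
    by (simp add: paths_def sum_distrib_left mult.assoc)
  also have "\<dots> = (\<Sum>(x, y)\<in>V \<times> V. M x y * paths x y)"
    by (rule sum.cartesian_product)
  also have "(\<dots>)\<^sup>2 \<le> (\<Sum>(x, y)\<in>V \<times> V. (M x y)\<^sup>2) * (\<Sum>(x, y)\<in>V \<times> V. (paths x y)\<^sup>2)"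
    using Cauchy_Schwarz_ineq_sum[of "\<lambda>(x, y). M x y" "\<lambda>(x, y). paths x y" "V \<times> V"]
    by (simp add: case_prod_unfold)
  also have "\<dots> \<le> E * (E * E)"
  proof (rule mult_mono)
    show "(\<Sum>(x, y)\<in>V \<times> V. (M x y)\<^sup>2) \<le> E"
      unfolding E_def sum.cartesian_product[symmetric] by (intro sum_mono sq_le)
    have "(paths x y)\<^sup>2 \<le> out y * inn x" if "x \<in> V" "y \<in> V" for x y
    proof -
      have "(paths x y)\<^sup>2 \<le> (\<Sum>z\<in>V. (M y z)\<^sup>2) * (\<Sum>z\<in>V. (M z x)\<^sup>2)"
        unfolding paths_def by (rule Cauchy_Schwarz_ineq_sum)
      also have "\<dots> \<le> out y * inn x"
        unfolding out_def inn_def using that by (intro mult_mono sum_mono sq_le sum_nonneg M_ge) auto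
      finally show ?thesis .
    qed
    then have "(\<Sum>(x, y)\<in>V \<times> V. (paths x y)\<^sup>2) \<le> (\<Sum>(x, y)\<in>V \<times> V. out y * inn x)"
      by (intro sum_mono) auto
    also have "\<dots> = (\<Sum>x\<in>V. inn x) * (\<Sum>y\<in>V. out y)"
      by (simp add: sum.cartesian_product sum_product mult.commute)
    also have "\<dots> = E * E"
      unfolding inn_def out_def E_def by (simp add: sum.swap[of "\<lambda>x z. M z x"])
    finally show "(\<Sum>(x, y)\<in>V \<times> V. (paths x y)\<^sup>2) \<le> E * E" .
  qed (use \<open>0 \<le> E\<close> in \<open>auto intro: sum_nonneg\<close>)
  finally show ?thesis by (simp add: E_def power3_eq_cube)
qed

lemma le_powr_three_halves:
  fixes S E c N :: real
  assumes "S\<^sup>2 \<le> E ^ 3" "0 \<le> E" "E \<le> c * N\<^sup>2" "0 \<le> c" "0 \<le> N"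
  shows "S \<le> c powr (3/2) * N ^ 3"
proof -
  have "S \<le> sqrt (E ^ 3)" using assms(1) by (rule real_le_rsqrt)
  also have "\<dots> \<le> sqrt ((c * N\<^sup>2) ^ 3)" using assms(2,3) by (intro real_sqrt_le_mono power_mono)
  also have "(c * N\<^sup>2) ^ 3 = c ^ 3 * (N ^ 3)\<^sup>2" by (simp add: power_mult_distrib flip: power_mult)
  also have "sqrt \<dots> = sqrt (c ^ 3) * N ^ 3" using assms(5) by (simp only: real_sqrt_mult real_sqrt_abs abs_of_nonneg zero_le_power)
  also have "sqrt (c ^ 3) = c powr (3/2)" using assms(4) by (simp add: powr_half_sqrt_powr)
  finally show ?thesis .
qed

lemma le_mult_sqrt:
  fixes t u B :: real
  assumes "t \<le> u\<^sup>2" "t \<le> B" "0 \<le> u" "0 \<le> B"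
  shows "t \<le> u * sqrt B"
proof (cases "t \<le> 0")
  case True
  moreover have "0 \<le> u * sqrt B" using assms(3,4) by simp
  ultimately show ?thesis by linarith
next
  case False
  have "sqrt t \<le> u" using assms(3,1) by (rule real_le_lsqrt)
  moreover have "sqrt t \<le> sqrt B" using assms(2) by (rule real_sqrt_le_mono)
  ultimately have "sqrt t * sqrt t \<le> u * sqrt B" by (rule mult_mono) (use assms(3) False in auto)
  then show ?thesis using False by simp
qed

lemma hm_commute: "hm a b = hm b a"
  by (simp add: hm_def mult.commute add.commute)

lemma hm_nonneg: "0 \<le> a \<Longrightarrow> 0 \<le> b \<Longrightarrow> 0 \<le> hm a b"
  by (simp add: hm_def)

lemma hm_mult: "0 \<le> k \<Longrightarrow> hm (k * a) (k * b) = k * hm a b"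
proof (cases "k = 0 \<or> a + b = 0")
  case True
  then show ?thesis by (auto simp: hm_def simp flip: distrib_left)
next
  case False
  have "k * a * (k * b) / (k * a + k * b) = k * (k * (a * b)) / (k * (a + b))"
    by (simp add: algebra_simps)
  also have "\<dots> = k * (a * b / (a + b))" using False by simp
  finally show ?thesis using False by (auto simp: hm_def)
qed

lemma mult_le_weighted_squares:
  fixes b c s t :: real
  assumes "s + t = 1"
  shows "b * c \<le> (b + c) * (s\<^sup>2 * b + t\<^sup>2 * c)"
proof -
  from assms have t: "t = 1 - s" by simp
  have "(b + c) * (s\<^sup>2 * b + t\<^sup>2 * c) - b * c = (s * b - t * c)\<^sup>2"
    unfolding t by (simp add: power2_eq_square algebra_simps)
  then show ?thesis by (metis diff_ge_0_iff_ge zero_le_power2)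
qed

lemma sum_mult_le_hm:
  fixes b c :: "'i \<Rightarrow> real"
  assumes b: "\<And>i. i \<in> I \<Longrightarrow> 0 \<le> b i" and c: "\<And>i. i \<in> I \<Longrightarrow> 0 \<le> c i"
    and bound: "\<And>i. i \<in> I \<Longrightarrow> b i + c i \<le> m"
  shows "(\<Sum>i\<in>I. b i * c i) \<le> m * hm (\<Sum>i\<in>I. b i) (\<Sum>i\<in>I. c i)"
proof -
  define B C where "B = (\<Sum>i\<in>I. b i)" and "C = (\<Sum>i\<in>I. c i)"
  have "0 \<le> B" "0 \<le> C" unfolding B_def C_def using b c by (auto intro: sum_nonneg)
  have weighted: "(\<Sum>i\<in>I. b i * c i) \<le> m * (s\<^sup>2 * B + t\<^sup>2 * C)" if "s + t = 1" for s t
  proof -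
    have "b i * c i \<le> m * (s\<^sup>2 * b i + t\<^sup>2 * c i)" if "i \<in> I" for i
    proof -
      have "b i * c i \<le> (b i + c i) * (s\<^sup>2 * b i + t\<^sup>2 * c i)"
        using \<open>s + t = 1\<close> by (rule mult_le_weighted_squares)
      also have "\<dots> \<le> m * (s\<^sup>2 * b i + t\<^sup>2 * c i)"
        using bound[OF that] b[OF that] c[OF that] by (intro mult_right_mono) auto
      finally show ?thesis .
    qed
    then have "(\<Sum>i\<in>I. b i * c i) \<le> (\<Sum>i\<in>I. m * (s\<^sup>2 * b i + t\<^sup>2 * c i))" by (rule sum_mono)
    also have "\<dots> = m * (s\<^sup>2 * B + t\<^sup>2 * C)"
      by (simp add: B_def C_def sum.distrib flip: sum_distrib_left)
    finally show ?thesis .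
  qed
  show ?thesis
  proof (cases "B + C = 0")
    case True
    then have "B = 0" "C = 0" using \<open>0 \<le> B\<close> \<open>0 \<le> C\<close> by auto
    then show ?thesis using weighted[of 0 1] by (simp add: B_def C_def hm_def)
  next
    case False
    have "(C / (B + C))\<^sup>2 * B + (B / (B + C))\<^sup>2 * C = (C * C * B + B * B * C) / ((B + C) * (B + C))"
      by (simp add: power2_eq_square add_divide_distrib)
    also have "\<dots> = B * C * (B + C) / ((B + C) * (B + C))"
      by (simp add: algebra_simps)
    also have "\<dots> = hm B C" using False by (simp add: hm_def)
    finally have "(C / (B + C))\<^sup>2 * B + (B / (B + C))\<^sup>2 * C = hm B C" .
    moreover have "C / (B + C) + B / (B + C) = 1"
      using False by (simp flip: add_divide_distrib add: add.commute)
    ultimately show ?thesis using weighted[of "C / (B + C)" "B / (B + C)"] by (simp add: B_def C_def)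
  qed
qed

lemma sum_distinct_triples_le_local_bound:
  fixes W a :: "'a \<Rightarrow> 'a \<Rightarrow> 'a \<Rightarrow> real"
  assumes "finite V"
    and pointwise: "\<And>x y z. x \<in> V \<Longrightarrow> y \<in> V \<Longrightarrow> z \<in> V \<Longrightarrow> x \<noteq> y \<Longrightarrow> y \<noteq> z \<Longrightarrow> x \<noteq> z \<Longrightarrow>
                      W x y z + \<kappa> \<le> a x y z + a y x z + a z x y"
    and degenerate: "\<And>x y z. x \<in> V \<Longrightarrow> y \<in> V \<Longrightarrow> z \<in> V \<Longrightarrow> x = y \<or> y = z \<or> x = z \<Longrightarrow> 0 \<le> a x y z"
    and local_bound: "\<And>x. x \<in> V \<Longrightarrow> (\<Sum>y\<in>V. \<Sum>z\<in>V. a x y z) \<le> C"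
  shows "(\<Sum>x\<in>V. \<Sum>y\<in>V. \<Sum>z\<in>V. of_bool (x \<noteq> y \<and> y \<noteq> z \<and> x \<noteq> z) * W x y z)
           \<le> 3 * real (card V) * C - \<kappa> * (real (card V) * (real (card V) - 1) * (real (card V) - 2))"
proof -
  define D :: "'a \<Rightarrow> 'a \<Rightarrow> 'a \<Rightarrow> real" where "D x y z = of_bool (x \<noteq> y \<and> y \<noteq> z \<and> x \<noteq> z)" for x y z
  define A where "A x y z = D x y z * a x y z" for x y z
  have sum_A_le: "(\<Sum>x\<in>V. \<Sum>y\<in>V. \<Sum>z\<in>V. A x y z) \<le> real (card V) * C"
  proof -
    have "(\<Sum>y\<in>V. \<Sum>z\<in>V. A x y z) \<le> C" if "x \<in> V" for x
    proof -
      have "(\<Sum>y\<in>V. \<Sum>z\<in>V. A x y z) \<le> (\<Sum>y\<in>V. \<Sum>z\<in>V. a x y z)"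
        unfolding A_def D_def using that degenerate by (intro sum_mono) auto
      also have "\<dots> \<le> C" using local_bound[OF that] .
      finally show ?thesis .
    qed
    then have "(\<Sum>x\<in>V. \<Sum>y\<in>V. \<Sum>z\<in>V. A x y z) \<le> (\<Sum>x\<in>V. C)" by (rule sum_mono)
    then show ?thesis by simp
  qed
  have "(\<Sum>x\<in>V. \<Sum>y\<in>V. \<Sum>z\<in>V. D x y z * W x y z)
      \<le> (\<Sum>x\<in>V. \<Sum>y\<in>V. \<Sum>z\<in>V. A x y z + A y x z + A z x y - \<kappa> * D x y z)"
  proof (intro sum_mono)
    fix x y z assume "x \<in> V" "y \<in> V" "z \<in> V"
    then show "D x y z * W x y z \<le> A x y z + A y x z + A z x y - \<kappa> * D x y z"
      using pointwise[of x y z] by (auto simp: A_def D_def)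
  qed
  also have "\<dots> = 3 * (\<Sum>x\<in>V. \<Sum>y\<in>V. \<Sum>z\<in>V. A x y z) - \<kappa> * (\<Sum>x\<in>V. \<Sum>y\<in>V. \<Sum>z\<in>V. D x y z)"
  proof -
    have "(\<Sum>x\<in>V. \<Sum>y\<in>V. \<Sum>z\<in>V. A x y z + A y x z + A z x y - \<kappa> * D x y z)
        = (\<Sum>x\<in>V. \<Sum>y\<in>V. \<Sum>z\<in>V. A x y z) + (\<Sum>x\<in>V. \<Sum>y\<in>V. \<Sum>z\<in>V. A y x z)
          + (\<Sum>x\<in>V. \<Sum>y\<in>V. \<Sum>z\<in>V. A z x y) - \<kappa> * (\<Sum>x\<in>V. \<Sum>y\<in>V. \<Sum>z\<in>V. D x y z)"
      by (simp add: sum.distrib sum_subtractf sum_distrib_left)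
    then show ?thesis using sum_triples_swap(1,3)[of A V] by linarith
  qed
  also have "\<dots> \<le> 3 * (real (card V) * C) - \<kappa> * (real (card V) * (real (card V) - 1) * (real (card V) - 2))"
    using sum_A_le sum_of_bool_distinct_triples[OF assms(1)] by (simp add: D_def)
  finally show ?thesis by (simp add: D_def)
qed

lemma sum_sum_mult:
  fixes c :: real
  shows "(\<Sum>y\<in>V. \<Sum>z\<in>V. c * f y * g z) = c * sum f V * sum g V"
proof -
  have "c * sum f V * sum g V = (\<Sum>y\<in>V. c * f y) * sum g V" by (simp only: sum_distrib_left)
  also have "\<dots> = (\<Sum>y\<in>V. \<Sum>z\<in>V. c * f y * g z)" by (rule sum_product)
  finally show ?thesis ..
qed

text \<open>The quadratic form of the local certificate for \<open>T\<^sub>c \<le> 0.465 n\<^sup>3/6\<close> (note \<open>0.465 = 93/200\<close>),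
  evaluated on the numbers \<open>b, g, r\<close> of blue, green-or-purple and outgoing red pairs at a vertex.
  On the diagonal it is \<open>(31 s\<^sup>2 - 107 s r + 93 r\<^sup>2)/200 + g r\<close> with \<open>s = b + g\<close>, which is
  nonnegative because \<open>107\<^sup>2 < 4 \<cdot> 31 \<cdot> 93\<close>.\<close>
definition cherry_form :: "real \<Rightarrow> real \<Rightarrow> real \<Rightarrow> real \<Rightarrow> real \<Rightarrow> real \<Rightarrow> real" where
  "cherry_form b g r b' g' r' =
     31/200 * (b + g) * (b' + g') + (-107/400) * b * r' + (-107/400) * r * b'
     + 93/400 * g * r' + 93/400 * r * g' + 93/200 * r * r'"

lemma sum_cherry_form:
  "(\<Sum>y\<in>V. \<Sum>z\<in>V. cherry_form (b y) (g y) (r y) (b z) (g z) (r z))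
     = cherry_form (sum b V) (sum g V) (sum r V) (sum b V) (sum g V) (sum r V)"
  unfolding cherry_form_def by (simp only: sum.distrib sum_sum_mult)

lemma cherry_form_nonneg:
  assumes "0 \<le> b" "0 \<le> g" "0 \<le> r"
  shows "0 \<le> cherry_form b g r b g r"
proof -
  define s where "s = b + g"
  have "cherry_form b g r b g r = ((62 * s - 107 * r)\<^sup>2 + 83 * r\<^sup>2) / 24800 + g * r"
    unfolding cherry_form_def s_def by (simp add: power2_eq_square field_simps)
  also have "0 \<le> \<dots>" using assms by simp
  finally show ?thesis .
qed

section \<open>Colourings of pairs\<close>

locale pair_colouring =
  fixes V :: "'a set" and col :: "'a \<Rightarrow> 'a \<Rightarrow> colour" and dir :: "'a \<Rightarrow> 'a \<Rightarrow> bool"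
  assumes finite_V: "finite V" and valid: "valid_colouring V col dir"
begin

lemma col_commute: "x \<in> V \<Longrightarrow> y \<in> V \<Longrightarrow> col y x = col x y"
  using valid unfolding valid_colouring_def by (cases "x = y") auto

lemma dir_flip: "x \<in> V \<Longrightarrow> y \<in> V \<Longrightarrow> x \<noteq> y \<Longrightarrow> col x y \<in> {Red, Purple} \<Longrightarrow> dir y x \<longleftrightarrow> \<not> dir x y"
  using valid unfolding valid_colouring_def by blast

definition edge :: "colour \<Rightarrow> 'a \<Rightarrow> 'a \<Rightarrow> real" where
  "edge c x y = of_bool (x \<noteq> y \<and> col x y = c)"

definition arc :: "colour \<Rightarrow> 'a \<Rightarrow> 'a \<Rightarrow> real" where
  "arc c x y = of_bool (x \<noteq> y \<and> col x y = c \<and> dir x y)"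

lemma sum_edge: "(\<Sum>x\<in>V. \<Sum>y\<in>V. edge c x y) = 2 * real (card (pairs_of_colour V col c))"
proof -
  have "(\<Sum>x\<in>V. \<Sum>y\<in>V. edge c x y) = real (card {(x, y) \<in> V \<times> V. x \<noteq> y \<and> col x y = c})"
    unfolding edge_def by (rule sum_of_bool_over_pairs[OF finite_V])
  also have "\<dots> = 2 * real (card (pairs_of_colour V col c))"
    using card_ordered_pairs_symmetric[OF finite_V, of "\<lambda>x y. col x y = c"] col_commute
    unfolding pairs_of_colour_def by simp
  finally show ?thesis .
qed

lemma sum_arc:
  assumes "c \<in> {Red, Purple}"
  shows "(\<Sum>x\<in>V. \<Sum>y\<in>V. arc c x y) = real (card (pairs_of_colour V col c))"
proof -
  have "edge c x y = arc c x y + arc c y x" if "x \<in> V" "y \<in> V" for x y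
    using col_commute[OF that] dir_flip[OF that] assms by (auto simp: edge_def arc_def)
  then have "(\<Sum>x\<in>V. \<Sum>y\<in>V. edge c x y) = (\<Sum>x\<in>V. \<Sum>y\<in>V. arc c x y) + (\<Sum>x\<in>V. \<Sum>y\<in>V. arc c y x)"
    by (simp add: sum.distrib)
  also have "(\<Sum>x\<in>V. \<Sum>y\<in>V. arc c y x) = (\<Sum>x\<in>V. \<Sum>y\<in>V. arc c x y)" by (rule sum.swap)
  finally show ?thesis using sum_edge[of c] by simp
qed

definition green_triangle :: "'a \<Rightarrow> 'a \<Rightarrow> 'a \<Rightarrow> bool" where
  "green_triangle x y z \<longleftrightarrow> col x y = Green \<and> col y z = Green \<and> col x z = Green"

definition purple_cycle :: "'a \<Rightarrow> 'a \<Rightarrow> 'a \<Rightarrow> bool" where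
  "purple_cycle x y z \<longleftrightarrow>
     col x y = Purple \<and> col y z = Purple \<and> col z x = Purple \<and> dir x y \<and> dir y z \<and> dir z x"

definition cherry :: "'a \<Rightarrow> 'a \<Rightarrow> 'a \<Rightarrow> bool" where
  "cherry x y z \<longleftrightarrow> col y z = Blue \<and> col x y = Red \<and> col x z = Red \<and> dir y x \<and> dir z x"

lemma T_g_eq_card: "T_g V col = card (three_subsets_with V green_triangle)"
  unfolding T_g_def three_subsets_with_def green_triangle_def ..

lemma T_p_eq_card: "T_p V col dir = card (three_subsets_with V purple_cycle)"
  unfolding T_p_def three_subsets_with_def purple_cycle_def ..

lemma T_c_eq_card: "T_c V col dir = card (three_subsets_with V cherry)"
  unfolding T_c_def three_subsets_with_def cherry_def ..

lemma six_T_g_eq_sum: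
  "6 * real (T_g V col) = (\<Sum>x\<in>V. \<Sum>y\<in>V. \<Sum>z\<in>V. edge Green x y * edge Green y z * edge Green z x)"
proof -
  have "of_bool (x \<noteq> y \<and> y \<noteq> z \<and> x \<noteq> z) * of_bool (in_some_order green_triangle x y z)
          = edge Green x y * edge Green y z * edge Green z x"
    if "x \<in> V" "y \<in> V" "z \<in> V" for x y z
  proof -
    have "(x \<noteq> y \<and> y \<noteq> z \<and> x \<noteq> z) \<and> in_some_order green_triangle x y z
        \<longleftrightarrow> (x \<noteq> y \<and> col x y = Green) \<and> (y \<noteq> z \<and> col y z = Green) \<and> (z \<noteq> x \<and> col z x = Green)"
      unfolding in_some_order_def green_triangle_def
        col_commute[OF that(1,2)] col_commute[OF that(1,3)] col_commute[OF that(2,3)] by auto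
    then show ?thesis by (simp add: edge_def flip: of_bool_conj)
  qed
  then show ?thesis
    unfolding T_g_eq_card sum_ordered_triples_three_subsets_with[OF finite_V, symmetric]
    by (intro sum.cong refl) auto
qed

lemma three_T_p_eq_sum:
  "3 * real (T_p V col dir) = (\<Sum>x\<in>V. \<Sum>y\<in>V. \<Sum>z\<in>V. arc Purple x y * arc Purple y z * arc Purple z x)"
proof -
  define C where "C x y z = arc Purple x y * arc Purple y z * arc Purple z x" for x y z
  have C_eq: "C x y z = of_bool (x \<noteq> y \<and> y \<noteq> z \<and> x \<noteq> z \<and> purple_cycle x y z)" for x y z
    by (auto simp: C_def arc_def purple_cycle_def)
  have "of_bool (x \<noteq> y \<and> y \<noteq> z \<and> x \<noteq> z) * of_bool (in_some_order purple_cycle x y z) = C x y z + C x z y"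
    if "x \<in> V" "y \<in> V" "z \<in> V" for x y z
  proof -
    have "in_some_order purple_cycle x y z \<longleftrightarrow> purple_cycle x y z \<or> purple_cycle x z y"
      unfolding in_some_order_def purple_cycle_def by auto
    moreover have "\<not> (purple_cycle x y z \<and> purple_cycle x z y)" if "x \<noteq> y"
      using dir_flip[OF \<open>x \<in> V\<close> \<open>y \<in> V\<close> that] col_commute[OF \<open>x \<in> V\<close> \<open>y \<in> V\<close>]
      by (auto simp: purple_cycle_def)
    ultimately show ?thesis unfolding C_eq by auto
  qed
  then have "6 * real (T_p V col dir) = (\<Sum>x\<in>V. \<Sum>y\<in>V. \<Sum>z\<in>V. C x y z + C x z y)"
    unfolding T_p_eq_card sum_ordered_triples_three_subsets_with[OF finite_V, symmetric]
    by (intro sum.cong refl) auto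
  also have "\<dots> = 2 * (\<Sum>x\<in>V. \<Sum>y\<in>V. \<Sum>z\<in>V. C x y z)"
    using sum_triples_swap(2)[of C V] by (simp add: sum.distrib)
  finally show ?thesis by (simp add: C_def)
qed

lemma two_T_c_eq_sum:
  "2 * real (T_c V col dir) = (\<Sum>x\<in>V. \<Sum>y\<in>V. \<Sum>z\<in>V. arc Red y x * arc Red z x * edge Blue y z)"
proof -
  define K where "K x y z = arc Red y x * arc Red z x * edge Blue y z" for x y z
  have K_eq: "K x y z = of_bool (x \<noteq> y \<and> y \<noteq> z \<and> x \<noteq> z \<and> cherry x y z)"
    if "x \<in> V" "y \<in> V" "z \<in> V" for x y z
    using col_commute[OF that(1,2)] col_commute[OF that(1,3)] by (auto simp: K_def arc_def edge_def cherry_def)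
  have "of_bool (x \<noteq> y \<and> y \<noteq> z \<and> x \<noteq> z) * of_bool (in_some_order cherry x y z) = K x y z + K y x z + K z x y"
    if "x \<in> V" "y \<in> V" "z \<in> V" for x y z
  proof -
    have "in_some_order cherry x y z \<longleftrightarrow> cherry x y z \<or> cherry y x z \<or> cherry z x y"
      unfolding in_some_order_def cherry_def
        col_commute[OF that(1,2)] col_commute[OF that(1,3)] col_commute[OF that(2,3)] by auto
    moreover have "\<not> (cherry x y z \<and> cherry y x z)" "\<not> (cherry x y z \<and> cherry z x y)"
      "\<not> (cherry y x z \<and> cherry z x y)"
      unfolding cherry_def col_commute[OF that(1,2)] col_commute[OF that(1,3)] col_commute[OF that(2,3)]
      by auto
    ultimately show ?thesis using that by (auto simp: K_eq)
  qed
  then have "6 * real (T_c V col dir) = (\<Sum>x\<in>V. \<Sum>y\<in>V. \<Sum>z\<in>V. K x y z + K y x z + K z x y)"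
    unfolding T_c_eq_card sum_ordered_triples_three_subsets_with[OF finite_V, symmetric]
    by (intro sum.cong refl) auto
  also have "\<dots> = 3 * (\<Sum>x\<in>V. \<Sum>y\<in>V. \<Sum>z\<in>V. K x y z)"
    using sum_triples_swap(1)[of K V] sum_triples_swap(3)[of K V] by (simp add: sum.distrib)
  finally show ?thesis by (simp add: K_def)
qed

lemma T_g_cauchy_schwarz:
  "(6 * real (T_g V col))\<^sup>2 \<le> (2 * real (card (pairs_of_colour V col Green))) ^ 3"
  unfolding six_T_g_eq_sum sum_edge[symmetric]
  by (rule cyclic_triangle_sum_squared_le) (simp_all add: edge_def)

lemma T_p_cauchy_schwarz:
  "(3 * real (T_p V col dir))\<^sup>2 \<le> real (card (pairs_of_colour V col Purple)) ^ 3"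
  unfolding three_T_p_eq_sum sum_arc[of Purple, simplified, symmetric]
  by (rule cyclic_triangle_sum_squared_le) (simp_all add: arc_def)

lemma two_T_c_le_sqrt:
  "2 * real (T_c V col dir)
     \<le> real (card (pairs_of_colour V col Red)) * sqrt (2 * real (card (pairs_of_colour V col Blue)))"
proof -
  define indeg where "indeg x = (\<Sum>y\<in>V. arc Red y x)" for x
  define B where "B = 2 * real (card (pairs_of_colour V col Blue))"
  have "(\<Sum>y\<in>V. \<Sum>z\<in>V. arc Red y x * arc Red z x * edge Blue y z) \<le> indeg x * sqrt B" for x
  proof (rule le_mult_sqrt)
    have "(\<Sum>y\<in>V. \<Sum>z\<in>V. arc Red y x * arc Red z x * edge Blue y z) \<le> (\<Sum>y\<in>V. \<Sum>z\<in>V. arc Red y x * arc Red z x)"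
      by (intro sum_mono) (simp add: arc_def edge_def)
    also have "\<dots> = (indeg x)\<^sup>2" by (simp add: indeg_def power2_eq_square sum_product)
    finally show "(\<Sum>y\<in>V. \<Sum>z\<in>V. arc Red y x * arc Red z x * edge Blue y z) \<le> (indeg x)\<^sup>2" .
    have "(\<Sum>y\<in>V. \<Sum>z\<in>V. arc Red y x * arc Red z x * edge Blue y z) \<le> (\<Sum>y\<in>V. \<Sum>z\<in>V. edge Blue y z)"
      by (intro sum_mono) (simp add: arc_def edge_def)
    then show "(\<Sum>y\<in>V. \<Sum>z\<in>V. arc Red y x * arc Red z x * edge Blue y z) \<le> B"
      by (simp add: B_def sum_edge)
  qed (auto simp: indeg_def B_def arc_def intro: sum_nonneg)
  then have "2 * real (T_c V col dir) \<le> (\<Sum>x\<in>V. indeg x * sqrt B)"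
    unfolding two_T_c_eq_sum by (rule sum_mono)
  also have "\<dots> = real (card (pairs_of_colour V col Red)) * sqrt B"
    using sum_arc[of Red] by (simp add: indeg_def sum.swap[of "\<lambda>x y. arc Red y x"] flip: sum_distrib_right)
  finally show ?thesis by (simp add: B_def)
qed

lemma two_T_c_le_hm:
  "2 * real (T_c V col dir)
     \<le> (real (card V) - 1) * hm (2 * real (card (pairs_of_colour V col Blue))) (real (card (pairs_of_colour V col Red)))"
proof -
  define blue where "blue y = (\<Sum>z\<in>V. edge Blue y z)" for y
  define outdeg where "outdeg y = (\<Sum>x\<in>V. arc Red y x)" for y
  have "2 * real (T_c V col dir) = (\<Sum>y\<in>V. \<Sum>z\<in>V. \<Sum>x\<in>V. arc Red y x * arc Red z x * edge Blue y z)"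
    unfolding two_T_c_eq_sum by (subst sum.swap) (intro sum.cong refl sum.swap)
  also have "\<dots> \<le> (\<Sum>y\<in>V. \<Sum>z\<in>V. \<Sum>x\<in>V. arc Red y x * edge Blue y z)"
    by (intro sum_mono) (simp add: arc_def edge_def)
  also have "\<dots> = (\<Sum>y\<in>V. blue y * outdeg y)"
    by (simp add: blue_def outdeg_def sum_product mult.commute)
  also have "\<dots> \<le> (real (card V) - 1) * hm (\<Sum>y\<in>V. blue y) (\<Sum>y\<in>V. outdeg y)"
  proof (rule sum_mult_le_hm)
    fix y assume "y \<in> V"
    have "blue y + outdeg y \<le> (\<Sum>z\<in>V. of_bool (y \<noteq> z))"
      unfolding blue_def outdeg_def sum.distrib[symmetric] by (intro sum_mono) (auto simp: edge_def arc_def)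
    then show "blue y + outdeg y \<le> real (card V) - 1" using sum_of_bool_neq[OF finite_V \<open>y \<in> V\<close>] by simp
  qed (auto simp: blue_def outdeg_def edge_def arc_def intro: sum_nonneg)
  also have "(\<Sum>y\<in>V. blue y) = 2 * real (card (pairs_of_colour V col Blue))"
    by (simp add: blue_def sum_edge)
  also have "(\<Sum>y\<in>V. outdeg y) = real (card (pairs_of_colour V col Red))"
    by (simp add: outdeg_def sum_arc)
  finally show ?thesis .
qed

definition purple_balance :: "'a \<Rightarrow> 'a \<Rightarrow> real" where
  "purple_balance x y = arc Purple y x - arc Purple x y"

definition balance_weight :: "'a \<Rightarrow> 'a \<Rightarrow> 'a \<Rightarrow> real" where
  "balance_weight x y z = of_bool (x \<noteq> y) * of_bool (x \<noteq> z) - purple_balance x y * purple_balance x z"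

lemma balance_weight_certificate:
  assumes V: "x \<in> V" "y \<in> V" "z \<in> V" and "x \<noteq> y" "y \<noteq> z" "x \<noteq> z"
  shows "4 * of_bool (in_some_order purple_cycle x y z) + of_bool (in_some_order green_triangle x y z)
           + of_bool (in_some_order cherry x y z) + 2
         \<le> balance_weight x y z + balance_weight y x z + balance_weight z x y"
  unfolding balance_weight_def purple_balance_def arc_def in_some_order_def
    purple_cycle_def green_triangle_def cherry_def
    col_commute[OF V(1,2)] col_commute[OF V(1,3)] col_commute[OF V(2,3)]
  using assms(4-6) dir_flip[OF V(1,2) assms(4)] dir_flip[OF V(1,3) assms(6)] dir_flip[OF V(2,3) assms(5)]
  by (cases "col x y"; cases "col x z"; cases "col y z"; cases "dir x y"; cases "dir x z"; cases "dir y z")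
    simp_all

lemma balance_weight_degenerate: "x = y \<or> y = z \<or> x = z \<Longrightarrow> 0 \<le> balance_weight x y z"
  by (auto simp: balance_weight_def purple_balance_def arc_def)

lemma sum_balance_weight_le:
  assumes "x \<in> V"
  shows "(\<Sum>y\<in>V. \<Sum>z\<in>V. balance_weight x y z) \<le> (real (card V) - 1)\<^sup>2"
proof -
  have "(\<Sum>y\<in>V. \<Sum>z\<in>V. balance_weight x y z)
      = (\<Sum>y\<in>V. of_bool (x \<noteq> y)) * (\<Sum>z\<in>V. of_bool (x \<noteq> z)) - (\<Sum>y\<in>V. purple_balance x y)\<^sup>2"
    by (simp add: balance_weight_def sum_subtractf power2_eq_square sum_product)
  also have "\<dots> \<le> (real (card V) - 1)\<^sup>2"
    using sum_of_bool_neq[OF finite_V assms] by (simp add: power2_eq_square)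
  finally show ?thesis .
qed

lemma six_joint_le:
  "6 * (4 * real (T_p V col dir) + real (T_g V col) + real (T_c V col dir)) \<le> real (card V) ^ 3 - real (card V)"
proof -
  define D :: "'a \<Rightarrow> 'a \<Rightarrow> 'a \<Rightarrow> real" where "D x y z = of_bool (x \<noteq> y \<and> y \<noteq> z \<and> x \<noteq> z)" for x y z
  define W :: "'a \<Rightarrow> 'a \<Rightarrow> 'a \<Rightarrow> real" where "W x y z = 4 * of_bool (in_some_order purple_cycle x y z)
    + of_bool (in_some_order green_triangle x y z) + of_bool (in_some_order cherry x y z)" for x y z
  have "6 * (4 * real (T_p V col dir) + real (T_g V col) + real (T_c V col dir))
      = 4 * (\<Sum>x\<in>V. \<Sum>y\<in>V. \<Sum>z\<in>V. D x y z * of_bool (in_some_order purple_cycle x y z))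
        + (\<Sum>x\<in>V. \<Sum>y\<in>V. \<Sum>z\<in>V. D x y z * of_bool (in_some_order green_triangle x y z))
        + (\<Sum>x\<in>V. \<Sum>y\<in>V. \<Sum>z\<in>V. D x y z * of_bool (in_some_order cherry x y z))"
    unfolding D_def T_p_eq_card T_g_eq_card T_c_eq_card sum_ordered_triples_three_subsets_with[OF finite_V] by simp
  also have "\<dots> = (\<Sum>x\<in>V. \<Sum>y\<in>V. \<Sum>z\<in>V. D x y z * W x y z)"
    by (simp add: W_def distrib_left sum.distrib sum_distrib_left mult.left_commute)
  also have "\<dots> \<le> 3 * real (card V) * (real (card V) - 1)\<^sup>2
      - 2 * (real (card V) * (real (card V) - 1) * (real (card V) - 2))"
    unfolding D_def
  proof (rule sum_distinct_triples_le_local_bound[OF finite_V, where a = balance_weight])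
    fix x y z assume "x \<in> V" "y \<in> V" "z \<in> V" "x \<noteq> y" "y \<noteq> z" "x \<noteq> z"
    then show "W x y z + 2 \<le> balance_weight x y z + balance_weight y x z + balance_weight z x y"
      unfolding W_def by (rule balance_weight_certificate)
  qed (blast intro: balance_weight_degenerate sum_balance_weight_le)+
  also have "\<dots> = real (card V) ^ 3 - real (card V)"
    by (simp add: power2_eq_square power3_eq_cube algebra_simps)
  finally show ?thesis .
qed

definition cherry_weight :: "'a \<Rightarrow> 'a \<Rightarrow> 'a \<Rightarrow> real" where
  "cherry_weight x y z = 93/200 * of_bool (x \<noteq> y) * of_bool (x \<noteq> z)
     - cherry_form (edge Blue x y) (edge Green x y + edge Purple x y) (arc Red x y)
         (edge Blue x z) (edge Green x z + edge Purple x z) (arc Red x z)"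

lemma cherry_weight_certificate:
  assumes V: "x \<in> V" "y \<in> V" "z \<in> V" and "x \<noteq> y" "y \<noteq> z" "x \<noteq> z"
  shows "of_bool (in_some_order cherry x y z) + 93/100
         \<le> cherry_weight x y z + cherry_weight y x z + cherry_weight z x y"
  unfolding cherry_weight_def cherry_form_def edge_def arc_def in_some_order_def cherry_def
    col_commute[OF V(1,2)] col_commute[OF V(1,3)] col_commute[OF V(2,3)]
  using assms(4-6) dir_flip[OF V(1,2) assms(4)] dir_flip[OF V(1,3) assms(6)] dir_flip[OF V(2,3) assms(5)]
  by (cases "col x y"; cases "col x z"; cases "col y z"; cases "dir x y"; cases "dir x z"; cases "dir y z")
    simp_all

lemma cherry_weight_degenerate: "x = y \<or> y = z \<or> x = z \<Longrightarrow> 0 \<le> cherry_weight x y z"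
  by (cases "col x y"; cases "dir x y") (auto simp: cherry_weight_def cherry_form_def edge_def arc_def)

lemma sum_cherry_weight_le:
  assumes "x \<in> V"
  shows "(\<Sum>y\<in>V. \<Sum>z\<in>V. cherry_weight x y z) \<le> 93/200 * (real (card V) - 1)\<^sup>2"
proof -
  define b g r where "b y = edge Blue x y" and "g y = edge Green x y + edge Purple x y"
    and "r y = arc Red x y" for y
  have "(\<Sum>y\<in>V. \<Sum>z\<in>V. cherry_weight x y z)
      = 93/200 * (\<Sum>y\<in>V. of_bool (x \<noteq> y)) * (\<Sum>z\<in>V. of_bool (x \<noteq> z))
        - cherry_form (sum b V) (sum g V) (sum r V) (sum b V) (sum g V) (sum r V)"
    unfolding cherry_weight_def sum_subtractf sum_sum_mult b_def g_def r_def
    by (simp only: sum_cherry_form)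
  also have "\<dots> = 93/200 * (real (card V) - 1)\<^sup>2
      - cherry_form (sum b V) (sum g V) (sum r V) (sum b V) (sum g V) (sum r V)"
    using sum_of_bool_neq[OF finite_V assms] by (simp add: power2_eq_square)
  also have "\<dots> \<le> 93/200 * (real (card V) - 1)\<^sup>2"
    using cherry_form_nonneg[of "sum b V" "sum g V" "sum r V"]
    by (simp add: b_def g_def r_def edge_def arc_def sum_nonneg add_nonneg_nonneg)
  finally show ?thesis .
qed

lemma six_T_c_le_cherry_bound: "6 * real (T_c V col dir) \<le> 93/200 * (real (card V) ^ 3 - real (card V))"
proof -
  have "6 * real (T_c V col dir)
      = (\<Sum>x\<in>V. \<Sum>y\<in>V. \<Sum>z\<in>V. of_bool (x \<noteq> y \<and> y \<noteq> z \<and> x \<noteq> z) * of_bool (in_some_order cherry x y z))"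
    unfolding T_c_eq_card sum_ordered_triples_three_subsets_with[OF finite_V] ..
  also have "\<dots> \<le> 3 * real (card V) * (93/200 * (real (card V) - 1)\<^sup>2)
      - 93/100 * (real (card V) * (real (card V) - 1) * (real (card V) - 2))"
  proof (rule sum_distinct_triples_le_local_bound[OF finite_V, where a = cherry_weight])
    fix x y z assume "x \<in> V" "y \<in> V" "z \<in> V" "x \<noteq> y" "y \<noteq> z" "x \<noteq> z"
    then show "of_bool (in_some_order cherry x y z) + 93/100
        \<le> cherry_weight x y z + cherry_weight y x z + cherry_weight z x y"
      by (rule cherry_weight_certificate)
  qed (blast intro: cherry_weight_degenerate sum_cherry_weight_le)+
  also have "\<dots> = 93/200 * (real (card V) ^ 3 - real (card V))"
    by (simp add: power2_eq_square power3_eq_cube field_simps)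
  finally show ?thesis .
qed

lemma T_g_density_bound:
  assumes "0 \<le> \<gamma>" "real (card (pairs_of_colour V col Green)) = \<gamma> * real (card V choose 2)"
  shows "real (T_g V col) \<le> \<gamma> powr (3/2) * real (card V) ^ 3 / 6"
proof -
  have "2 * real (card (pairs_of_colour V col Green)) = \<gamma> * (real (card V) * (real (card V) - 1))"
    using assms(2) by (simp add: real_choose_two)
  also have "\<dots> \<le> \<gamma> * (real (card V))\<^sup>2" by (rule mult_left_mono[OF mult_pred_le_square assms(1)])
  finally have "2 * real (card (pairs_of_colour V col Green)) \<le> \<gamma> * (real (card V))\<^sup>2" .
  then have "6 * real (T_g V col) \<le> \<gamma> powr (3/2) * real (card V) ^ 3"
    by (intro le_powr_three_halves[OF T_g_cauchy_schwarz]) (simp_all add: assms(1))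
  then show ?thesis by simp
qed

lemma T_p_density_bound:
  assumes "0 \<le> \<delta>" "real (card (pairs_of_colour V col Purple)) = 2 * \<delta> * real (card V choose 2)"
  shows "real (T_p V col dir) \<le> 2 * \<delta> powr (3/2) * real (card V) ^ 3 / 6"
proof -
  have "real (card (pairs_of_colour V col Purple)) = \<delta> * (real (card V) * (real (card V) - 1))"
    using assms(2) by (simp add: real_choose_two)
  also have "\<dots> \<le> \<delta> * (real (card V))\<^sup>2" by (rule mult_left_mono[OF mult_pred_le_square assms(1)])
  finally have "real (card (pairs_of_colour V col Purple)) \<le> \<delta> * (real (card V))\<^sup>2" .
  then have "3 * real (T_p V col dir) \<le> \<delta> powr (3/2) * real (card V) ^ 3"
    by (intro le_powr_three_halves[OF T_p_cauchy_schwarz]) (simp_all add: assms(1))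
  then show ?thesis by linarith
qed

lemma T_c_density_bound:
  assumes "0 \<le> \<alpha>" "0 \<le> \<beta>"
    and red: "real (card (pairs_of_colour V col Red)) = 2 * \<alpha> * real (card V choose 2)"
    and blue: "real (card (pairs_of_colour V col Blue)) = \<beta> * real (card V choose 2)"
  shows "real (T_c V col dir) \<le> min 0.465 (min (3 * hm \<alpha> \<beta>) (3 * \<alpha> * sqrt \<beta>)) * real (card V) ^ 3 / 6"
proof -
  define m where "m = real (card V)"
  have "0 \<le> m" "m * (m - 1) \<le> m\<^sup>2" unfolding m_def by (simp_all add: mult_pred_le_square)
  have "0 \<le> m * (m - 1)" by (cases "card V") (simp_all add: m_def)
  have red': "real (card (pairs_of_colour V col Red)) = \<alpha> * (m * (m - 1))"
    and blue': "2 * real (card (pairs_of_colour V col Blue)) = \<beta> * (m * (m - 1))"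
    using red blue by (simp_all add: m_def real_choose_two)
  have "6 * real (T_c V col dir) \<le> 0.465 * m ^ 3"
    using six_T_c_le_cherry_bound \<open>0 \<le> m\<close> unfolding m_def by simp
  moreover have "6 * real (T_c V col dir) \<le> 3 * hm \<alpha> \<beta> * m ^ 3"
  proof -
    have "hm (\<beta> * (m * (m - 1))) (\<alpha> * (m * (m - 1))) = m * (m - 1) * hm \<alpha> \<beta>"
      using \<open>0 \<le> m * (m - 1)\<close> by (metis hm_mult hm_commute mult.commute)
    then have "2 * real (T_c V col dir) \<le> (m - 1) * (m * (m - 1)) * hm \<alpha> \<beta>"
      using two_T_c_le_hm unfolding red' blue' m_def[symmetric] by (simp add: mult.assoc)
    also have "\<dots> \<le> m ^ 3 * hm \<alpha> \<beta>"
      using pred_mult_mult_pred_le_cube hm_nonneg[OF assms(1,2)] unfolding m_def by (rule mult_right_mono)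
    finally show ?thesis by (simp add: mult.commute)
  qed
  moreover have "6 * real (T_c V col dir) \<le> 3 * \<alpha> * sqrt \<beta> * m ^ 3"
  proof -
    have "2 * real (T_c V col dir) \<le> \<alpha> * (m * (m - 1)) * sqrt (\<beta> * (m * (m - 1)))"
      using two_T_c_le_sqrt unfolding red' blue' .
    also have "\<dots> \<le> \<alpha> * m\<^sup>2 * sqrt (\<beta> * m\<^sup>2)"
      using assms(1,2) \<open>0 \<le> m * (m - 1)\<close> \<open>m * (m - 1) \<le> m\<^sup>2\<close>
      by (intro mult_mono mult_left_mono real_sqrt_le_mono) auto
    also have "\<dots> = \<alpha> * sqrt \<beta> * m ^ 3"
      using \<open>0 \<le> m\<close> by (simp add: real_sqrt_mult power2_eq_square power3_eq_cube)
    finally show ?thesis by simp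
  qed
  ultimately show ?thesis by (simp add: m_def min_def)
qed

lemma joint_density_bound:
  "4 * real (T_p V col dir) + real (T_g V col) + real (T_c V col dir) \<le> real (card V) ^ 3 / 6"
  using six_joint_le by simp

end

theorem corollary5p4:
  fixes V :: "'a set" and n :: nat and col :: "'a \<Rightarrow> 'a \<Rightarrow> colour"
    and dir :: "'a \<Rightarrow> 'a \<Rightarrow> bool" and \<alpha> \<beta> \<gamma> \<delta> :: real
  assumes "finite V" and "card V = n"
    and "valid_colouring V col dir"
    and "\<alpha> \<ge> 0" and "\<beta> \<ge> 0" and "\<gamma> \<ge> 0" and "\<delta> \<ge> 0"
    and "real (card (pairs_of_colour V col Red)) = 2 * \<alpha> * real (n choose 2)"
    and "real (card (pairs_of_colour V col Blue)) = \<beta> * real (n choose 2)"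
    and "real (card (pairs_of_colour V col Green)) = \<gamma> * real (n choose 2)"
    and "real (card (pairs_of_colour V col Purple)) = 2 * \<delta> * real (n choose 2)"
  shows "real (T_p V col dir + T_g V col + T_c V col dir)
           \<le> f_fun \<alpha> \<beta> \<gamma> \<delta> * real n ^ 3 / 6"
proof -
  interpret pair_colouring V col dir using assms(1,3) by unfold_locales
  define N where "N = real n ^ 3 / 6"
  have purple: "real (T_p V col dir) \<le> 2 * \<delta> powr (3/2) * N"
    using T_p_density_bound assms(2,7,11) by (simp add: N_def)
  have "real (T_g V col) \<le> \<gamma> powr (3/2) * N"
    using T_g_density_bound assms(2,6,10) by (simp add: N_def)
  moreover have "real (T_c V col dir) \<le> min 0.465 (min (3 * hm \<alpha> \<beta>) (3 * \<alpha> * sqrt \<beta>)) * N"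
    using T_c_density_bound assms(2,4,5,8,9) by (simp add: N_def)
  ultimately have green_cherry: "real (T_g V col) + real (T_c V col dir) \<le> g_fun \<alpha> \<beta> \<gamma> * N"
    by (simp add: g_fun_def distrib_right)
  have joint: "4 * real (T_p V col dir) + real (T_g V col) + real (T_c V col dir) \<le> N"
    using joint_density_bound assms(2) by (simp add: N_def)
  have "real (T_p V col dir + T_g V col + T_c V col dir) \<le> (2 * \<delta> powr (3/2) + g_fun \<alpha> \<beta> \<gamma>) * N"
    using purple green_cherry by (simp add: distrib_right)
  moreover have "real (T_p V col dir + T_g V col + T_c V col dir) \<le> (1/4 + 3/4 * g_fun \<alpha> \<beta> \<gamma>) * N"
    using joint green_cherry by (simp add: distrib_right)
  ultimately show ?thesis by (simp add: f_fun_def N_def min_def)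
qed

end
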